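(* Let $n\ge1$, let $\preceq$ be an admissible order on $L([0,1])$. Then: (i) for $F\colon L([0,1])^2\to L([0,1])$ with $F(X,\mathbf1)=X$ for all $X$ and $F$ non-decreasing in the second variable, the IV Sugeno-like $FG$-functional $\mathbf S_m^{F,\vee}$ is idempotent for every IV fuzzy measure $m$; (ii) for $G=\vee$ or $G=\mathrm{Proj}_1$, the functional $\mathbf S_m^{\wedge,G}$ is idempotent for every IV fuzzy measure $m$; (iii) $\mathbf S_m^{\wedge,\vee}$ is idempotent for every IV fuzzy measure $m$.
   Context: $N=\{1,\dots,n\}$. $L([0,1])=\{[a,b]:0\le a\le b\le1\}$, $\mathbf0=[0,0]$, $\mathbf1=[1,1]$. An admissible order $\preceq$ is a total order on $L([0,1])$ such that $[a,b]\preceq[c,d]$ whenever $a\le c$ and $b\le d$. $\vee,\wedge$ denote maximum and minimum w.r.t. $\preceq$; monotonicity is w.r.t. $\preceq$; $\mathrm{Proj}_1(X_1,\dots,X_n)=X_1$. Idempotent means $\mathbf S(X,\dots,X)=X$ for all $X$. An IV fuzzy measure w.r.t. $\preceq$ is $m\colon2^N\to L([0,1])$ with $m(\emptyset)=\mathbf0$, $m(N)=\mathbf1$, $m(A)\preceq m(B)$ for $A\subseteq B$. For a permutation $\sigma$, $E_{\sigma(i)}=\{\sigma(i),\dots,\sigma(n)\}$. The IV Sugeno-like $FG$-functional is $\mathbf S_m^{F,G}(X_1,\dots,X_n)=G\big(F(X_{\sigma(1)},m(E_{\sigma(1)})),\dots,F(X_{\sigma(n)},m(E_{\sigma(n)}))\big)$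 with $\sigma$ any permutation such that $X_{\sigma(1)}\preceq\dots\preceq X_{\sigma(n)}$; it is defined when this value is independent of the choice of $\sigma$ for all inputs. *)

theory Defs
  imports Complex_Main "HOL-Combinatorics.Permutations"
begin

text \<open>Intervals [a,b] in L([0,1]) are represented as pairs (a,b) of reals.\<close>
type_synonym ivl = "real \<times> real"

definition L01 :: "ivl set" where
  "L01 = {(a,b). 0 \<le> a \<and> a \<le> b \<and> b \<le> 1}"

definition ivzero :: ivl where "ivzero = (0,0)"
definition ivone :: ivl where "ivone = (1,1)"

definition admissible_order :: "(ivl \<Rightarrow> ivl \<Rightarrow> bool) \<Rightarrow> bool" where
  "admissible_order le \<longleftrightarrow>
     (\<forall>x\<in>L01. le x x) \<and>
     (\<forall>x\<in>L01. \<forall>y\<in>L01. le x y \<and> le y x \<longrightarrow> x = y) \<and>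
     (\<forall>x\<in>L01. \<forall>y\<in>L01. \<forall>z\<in>L01. le x y \<and> le y z \<longrightarrow> le x z) \<and>
     (\<forall>x\<in>L01. \<forall>y\<in>L01. le x y \<or> le y x) \<and>
     (\<forall>a b c d. (a,b) \<in> L01 \<and> (c,d) \<in> L01 \<and> a \<le> c \<and> b \<le> d \<longrightarrow> le (a,b) (c,d))"

definition ivmax :: "(ivl \<Rightarrow> ivl \<Rightarrow> bool) \<Rightarrow> ivl \<Rightarrow> ivl \<Rightarrow> ivl" where
  "ivmax le x y = (if le x y then y else x)"

definition ivmin :: "(ivl \<Rightarrow> ivl \<Rightarrow> bool) \<Rightarrow> ivl \<Rightarrow> ivl \<Rightarrow> ivl" where
  "ivmin le x y = (if le x y then x else y)"

fun ivmax_list :: "(ivl \<Rightarrow> ivl \<Rightarrow> bool) \<Rightarrow> ivl list \<Rightarrow> ivl" where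
  "ivmax_list le [] = ivzero"
| "ivmax_list le (x # xs) = fold (ivmax le) xs x"

definition proj1 :: "ivl list \<Rightarrow> ivl" where
  "proj1 xs = hd xs"

definition iv_fuzzy_measure :: "(ivl \<Rightarrow> ivl \<Rightarrow> bool) \<Rightarrow> nat \<Rightarrow> (nat set \<Rightarrow> ivl) \<Rightarrow> bool" where
  "iv_fuzzy_measure le n m \<longleftrightarrow>
     (\<forall>A. A \<subseteq> {1..n} \<longrightarrow> m A \<in> L01) \<and>
     m {} = ivzero \<and> m {1..n} = ivone \<and>
     (\<forall>A B. A \<subseteq> B \<and> B \<subseteq> {1..n} \<longrightarrow> le (m A) (m B))"

definition sorting_perm :: "(ivl \<Rightarrow> ivl \<Rightarrow> bool) \<Rightarrow> nat \<Rightarrow> (nat \<Rightarrow> ivl) \<Rightarrow> (nat \<Rightarrow> nat) \<Rightarrow> bool" where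
  "sorting_perm le n X \<sigma> \<longleftrightarrow>
     \<sigma> permutes {1..n} \<and> (\<forall>i j. 1 \<le> i \<and> i \<le> j \<and> j \<le> n \<longrightarrow> le (X (\<sigma> i)) (X (\<sigma> j)))"

definition sugeno_FG ::
  "nat \<Rightarrow> (ivl \<Rightarrow> ivl \<Rightarrow> ivl) \<Rightarrow> (ivl list \<Rightarrow> ivl) \<Rightarrow> (nat set \<Rightarrow> ivl) \<Rightarrow> (nat \<Rightarrow> ivl) \<Rightarrow> (nat \<Rightarrow> nat) \<Rightarrow> ivl" where
  "sugeno_FG n F G m X \<sigma> = G (map (\<lambda>i. F (X (\<sigma> i)) (m (\<sigma> ` {i..n}))) [1..<n+1])"

definition sugeno_idempotent ::
  "(ivl \<Rightarrow> ivl \<Rightarrow> bool) \<Rightarrow> nat \<Rightarrow> (ivl \<Rightarrow> ivl \<Rightarrow> ivl) \<Rightarrow> (ivl list \<Rightarrow> ivl) \<Rightarrow> (nat set \<Rightarrow> ivl) \<Rightarrow> bool" where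
  "sugeno_idempotent le n F G m \<longleftrightarrow>
     (\<forall>X\<in>L01. \<forall>\<sigma>. sorting_perm le n (\<lambda>_. X) \<sigma> \<longrightarrow> sugeno_FG n F G m (\<lambda>_. X) \<sigma> = X)"

end

theory Submission
  imports Defs
begin

text \<open>For a constant input X and a sorting permutation, the first term of the Sugeno-like
  expression is F(X, m(N)) = F(X, 1) = X, and every later term F(X, m(E)) lies below X.
  Hence both the maximum and the first projection of the terms return X.\<close>

lemma fold_ivmax_dominated:
  assumes "\<forall>y\<in>set ys. le y x"
  shows "fold (ivmax le) ys x = x"
  using assms by (induction ys) (auto simp: ivmax_def)

lemma ivmax_list_Cons_dominated:
  assumes "\<forall>y\<in>set ys. le y x"
  shows "ivmax_list le (x # ys) = x"
  using assms by (simp add: fold_ivmax_dominated)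

lemma ivone_in_L01: "ivone \<in> L01"
  by (simp add: ivone_def L01_def)

lemma admissible_order_le_ivone:
  assumes "admissible_order le" "X \<in> L01"
  shows "le X ivone"
proof -
  obtain a b where X: "X = (a, b)" by fastforce
  with assms(2) have "(a, b) \<in> L01" "a \<le> 1" "b \<le> 1" by (auto simp: L01_def)
  with assms(1) ivone_in_L01 have "le (a, b) (1, 1)"
    unfolding admissible_order_def ivone_def by blast
  with X show ?thesis by (simp add: ivone_def)
qed

lemma admissible_order_ivmin_ivone:
  assumes "admissible_order le" "X \<in> L01"
  shows "ivmin le X ivone = X"
  using admissible_order_le_ivone[OF assms] by (simp add: ivmin_def)

lemma admissible_order_ivmin_le_left:
  assumes "admissible_order le" "X \<in> L01" "Y \<in> L01"
  shows "le (ivmin le X Y) X"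
proof -
  have "le X X \<and> (le X Y \<or> le Y X)"
    using assms unfolding admissible_order_def by blast
  then show ?thesis
    by (auto simp: ivmin_def)
qed

lemma iv_fuzzy_measure_in_L01:
  assumes "iv_fuzzy_measure le n m" "A \<subseteq> {1..n}"
  shows "m A \<in> L01"
  using assms by (simp add: iv_fuzzy_measure_def)

lemma sugeno_FG_Cons:
  assumes "n \<ge> 1" "\<sigma> permutes {1..n}"
  shows "sugeno_FG n F G m X \<sigma>
       = G (F (X (\<sigma> 1)) (m {1..n}) # map (\<lambda>i. F (X (\<sigma> i)) (m (\<sigma> ` {i..n}))) [2..<n+1])"
proof -
  have "[1..<n+1] = 1 # [2..<n+1]"
    using assms(1) upt_conv_Cons[of 1 "n+1"] by (simp add: numeral_2_eq_2)
  moreover have "\<sigma> ` {1..n} = {1..n}"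
    using assms(2) by (rule permutes_image)
  ultimately show ?thesis
    by (simp add: sugeno_FG_def)
qed

lemma sugeno_idempotent_ivmax_list:
  assumes "n \<ge> 1" "iv_fuzzy_measure le n m"
    and F_ivone: "\<forall>X\<in>L01. F X ivone = X"
    and F_le: "\<forall>X\<in>L01. \<forall>Y\<in>L01. le (F X Y) X"
  shows "sugeno_idempotent le n F (ivmax_list le) m"
  unfolding sugeno_idempotent_def
proof (intro ballI allI impI)
  fix X \<sigma>
  assume X: "X \<in> L01" and "sorting_perm le n (\<lambda>_. X) \<sigma>"
  then have \<sigma>: "\<sigma> permutes {1..n}"
    by (simp add: sorting_perm_def)
  have below: "\<forall>y\<in>set (map (\<lambda>i. F X (m (\<sigma> ` {i..n}))) [2..<n+1]). le y X"
  proof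
    fix y
    assume "y \<in> set (map (\<lambda>i. F X (m (\<sigma> ` {i..n}))) [2..<n+1])"
    then obtain i where "i \<ge> 2" and y: "y = F X (m (\<sigma> ` {i..n}))"
      by auto
    then have "\<sigma> ` {i..n} \<subseteq> {1..n}"
      using permutes_image[OF \<sigma>] by auto
    with assms(2) X F_le y show "le y X"
      by (simp add: iv_fuzzy_measure_in_L01)
  qed
  have first: "F X (m {1..n}) = X"
    using assms(2) F_ivone X by (simp add: iv_fuzzy_measure_def)
  show "sugeno_FG n F (ivmax_list le) m (\<lambda>_. X) \<sigma> = X"
    unfolding sugeno_FG_Cons[OF assms(1) \<sigma>] first
    by (rule ivmax_list_Cons_dominated[where le = le, OF below])
qed

lemma sugeno_idempotent_proj1:
  assumes "n \<ge> 1" "iv_fuzzy_measure le n m"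
    and F_ivone: "\<forall>X\<in>L01. F X ivone = X"
  shows "sugeno_idempotent le n F proj1 m"
  unfolding sugeno_idempotent_def
proof (intro ballI allI impI)
  fix X \<sigma>
  assume X: "X \<in> L01" and "sorting_perm le n (\<lambda>_. X) \<sigma>"
  then have \<sigma>: "\<sigma> permutes {1..n}"
    by (simp add: sorting_perm_def)
  have "F X (m {1..n}) = X"
    using assms(2) F_ivone X by (simp add: iv_fuzzy_measure_def)
  then show "sugeno_FG n F proj1 m (\<lambda>_. X) \<sigma> = X"
    by (simp add: sugeno_FG_Cons[OF assms(1) \<sigma>] proj1_def)
qed

theorem corollary2:
  fixes le :: "ivl \<Rightarrow> ivl \<Rightarrow> bool" and n :: nat
  assumes "n \<ge> 1" and "admissible_order le"
  shows "(\<forall>F. (\<forall>X\<in>L01. \<forall>Y\<in>L01. F X Y \<in> L01) \<and>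
              (\<forall>X\<in>L01. F X ivone = X) \<and>
              (\<forall>X\<in>L01. \<forall>Y\<in>L01. \<forall>Z\<in>L01. le Y Z \<longrightarrow> le (F X Y) (F X Z)) \<longrightarrow>
              (\<forall>m. iv_fuzzy_measure le n m \<longrightarrow> sugeno_idempotent le n F (ivmax_list le) m))
       \<and> (\<forall>G\<in>{ivmax_list le, proj1}.
              \<forall>m. iv_fuzzy_measure le n m \<longrightarrow> sugeno_idempotent le n (ivmin le) G m)
       \<and> (\<forall>m. iv_fuzzy_measure le n m \<longrightarrow> sugeno_idempotent le n (ivmin le) (ivmax_list le) m)"
proof -
  have ivmin_idempotent: "sugeno_idempotent le n (ivmin le) G m"
    if "G \<in> {ivmax_list le, proj1}" "iv_fuzzy_measure le n m" for G m
  proof -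
    have ivmin_ivone: "\<forall>X\<in>L01. ivmin le X ivone = X"
      using admissible_order_ivmin_ivone[OF assms(2)] by blast
    have "\<forall>X\<in>L01. \<forall>Y\<in>L01. le (ivmin le X Y) X"
      using admissible_order_ivmin_le_left[OF assms(2)] by blast
    with that assms(1) ivmin_ivone show ?thesis
      using sugeno_idempotent_ivmax_list sugeno_idempotent_proj1 by blast
  qed
  have "sugeno_idempotent le n F (ivmax_list le) m"
    if "iv_fuzzy_measure le n m" and F_ivone: "\<forall>X\<in>L01. F X ivone = X"
      and F_mono: "\<forall>X\<in>L01. \<forall>Y\<in>L01. \<forall>Z\<in>L01. le Y Z \<longrightarrow> le (F X Y) (F X Z)" for F m
  proof -
    have "\<forall>X\<in>L01. \<forall>Y\<in>L01. le (F X Y) X"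
      using F_mono F_ivone ivone_in_L01 admissible_order_le_ivone[OF assms(2)] by metis
    with assms(1) that(1) F_ivone show ?thesis
      by (rule sugeno_idempotent_ivmax_list)
  qed
  with ivmin_idempotent show ?thesis
    by blast
qed

end
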